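(* Let $Y\in\mathbb R^{m\times n}$, $0<c<1$ and $t>0$, and put $R_c:=\frac{1}{m+n}\log(1/c)$. (a) If $\delta(\exp(a)x_Y)<c^{\frac1{m+n}}$ for some $a\in C_{R_c}(t)$, then there is $a'\in C_0(t)$ with $\delta(\exp(a')x_Y)<c^{\frac{1}{m(m+n)}}$. (b) If $\delta(\exp(a)x_Y)<c^{\frac{m+n-1}{m(m+n)}}$ for some $a\in C_0(t)$, then there is $a'\in C_{R_c}\big(t-\frac{n-1}{m+n}\log c\big)$ with $\delta(\exp(a')x_Y)<c^{\frac1{m+n}}$.
   Context: $m,n\ge1$; $\mathfrak a=\{\operatorname{diag}(a_1,\dots,a_{m+n}):\sum a_i=0\}$, $G=\operatorname{SL}_{m+n}(\mathbb R)$ acting on unimodular lattices in $\mathbb R^{m+n}$. For a constant $R\in\mathbb R$ and $t\ge0$: $C_R(t):=\{a\in\mathfrak a:a_1+\dots+a_m=-(a_{m+1}+\dots+a_{m+n})=t,\ a_i>-R\ (1\le i\le m),\ a_{m+j}<-R\ (1\le j\le n)\}$; $C_0(t)$ is the case $R=0$. For a lattice $x$, $\delta(x):=\min\{\|\boldsymbol v\|_\infty:\boldsymbol v\in x\setminus\{0\}\}$. $x_Y:=\begin{pmatrix}I_m&Y\\0&I_n\end{pmatrix}\mathbb Z^{m+n}$. *)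

theory Defs
  imports "HOL-Analysis.Analysis"
begin

text \<open>Vectors in R^(m+n) are functions nat => real, coordinates 0..m+n-1
  (paper index i corresponds to i-1); coordinates >= m+n are 0.
  A real m x n matrix Y is a function nat => nat => real, only entries i<m, j<n matter.\<close>

text \<open>The lattice x_Y = [I_m Y; 0 I_n] Z^(m+n).\<close>
definition xY :: "nat \<Rightarrow> nat \<Rightarrow> (nat \<Rightarrow> nat \<Rightarrow> real) \<Rightarrow> (nat \<Rightarrow> real) set" where
  "xY m n Y = {v. \<exists>p q :: nat \<Rightarrow> int.
      v = (\<lambda>i. if i < m then of_int (p i) + (\<Sum>j<n. Y i j * of_int (q j))
               else if i < m + n then of_int (q (i - m)) else 0)}"

definition expact :: "(nat \<Rightarrow> real) \<Rightarrow> (nat \<Rightarrow> real) set \<Rightarrow> (nat \<Rightarrow> real) set" where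
  "expact a x = (\<lambda>v. (\<lambda>i. exp (a i) * v i)) ` x"

definition supnorm :: "nat \<Rightarrow> (nat \<Rightarrow> real) \<Rightarrow> real" where
  "supnorm N v = Max ((\<lambda>i. \<bar>v i\<bar>) ` {..<N})"

text \<open>delta(x) = min of the sup norm over nonzero lattice vectors (written as Inf; it is attained).\<close>
definition delta :: "nat \<Rightarrow> (nat \<Rightarrow> real) set \<Rightarrow> real" where
  "delta N x = Inf (supnorm N ` (x - {(\<lambda>_. 0)}))"

definition Ccone :: "nat \<Rightarrow> nat \<Rightarrow> real \<Rightarrow> real \<Rightarrow> (nat \<Rightarrow> real) set" where
  "Ccone m n R t = {a. (\<forall>i\<ge>m + n. a i = 0) \<and>
      (\<Sum>i<m. a i) = t \<and> (\<Sum>j<n. a (m + j)) = - t \<and>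
      (\<forall>i<m. a i > - R) \<and> (\<forall>j<n. a (m + j) < - R)}"

end

theory Submission
  imports Defs
begin

(* Write c = exp (-(m+n) R). The thresholds become exp (-R), exp (-R/m) and exp (-(m+n-1) R/m),
   and the new time in (b) becomes t + (n-1) R.
   In both parts one starts from a nonzero v in x_Y with exp (a_i) |v_i| below the threshold.
   The top exponents are bounded below, so the top coordinates of v have modulus < 1; hence some
   bottom coordinate, an integer, is nonzero, and its exponent lies below the threshold.
   (b) Raise the top exponents by (n-1) R/m and contract the bottom ones towards -R by
   x |-> -R + (t-R)/t x; the bottom exponent just found shows t > R, and v stays short.
   (a) Top exponents a_i <= 0 are uncontrolled. Dirichlet's simultaneous approximation gives
   k <= exp (R (m-1)/m) and integers p_i making k v_i - p_i small for those i; then k v - p stays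
   short after these exponents are raised to a small positive value and the positive ones are
   scaled down to keep their sum t. *)

lemma supnorm_less_iff:
  assumes "N \<ge> 1"
  shows "supnorm N u < B \<longleftrightarrow> (\<forall>i<N. \<bar>u i\<bar> < B)"
proof -
  have "0 \<in> {..<N}" using assms by simp
  then have "(\<lambda>i. \<bar>u i\<bar>) ` {..<N} \<noteq> {}" by blast
  then show ?thesis unfolding supnorm_def by (auto simp: Max_less_iff)
qed

lemma supnorm_nonneg:
  assumes "N \<ge> 1"
  shows "0 \<le> supnorm N u"
proof -
  have "\<bar>u 0\<bar> \<le> supnorm N u" unfolding supnorm_def using assms by (intro Max_ge) auto
  then show ?thesis by linarith
qed

lemma delta_expact_less_iff:
  assumes "N \<ge> 1" and "u \<in> x" and "u \<noteq> (\<lambda>_. 0)"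
  shows "delta N (expact a x) < B \<longleftrightarrow>
    (\<exists>v\<in>x. v \<noteq> (\<lambda>_. 0) \<and> (\<forall>i<N. exp (a i) * \<bar>v i\<bar> < B))"
proof -
  have scaled_eq_0: "(\<lambda>i. exp (a i) * v i) = (\<lambda>_. 0) \<longleftrightarrow> v = (\<lambda>_. 0)" for v :: "nat \<Rightarrow> real"
    by (simp add: fun_eq_iff)
  let ?S = "(\<lambda>v. supnorm N (\<lambda>i. exp (a i) * v i)) ` {v \<in> x. v \<noteq> (\<lambda>_. 0)}"
  have S_eq: "supnorm N ` (expact a x - {\<lambda>_. 0}) = ?S"
    unfolding expact_def using scaled_eq_0 by blast
  have "?S \<noteq> {}" using assms(2,3) by blast
  moreover have "bdd_below ?S"
    using supnorm_nonneg[OF assms(1)] by (auto intro: bdd_belowI[where m = 0])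
  ultimately have "Inf ?S < B \<longleftrightarrow> (\<exists>y\<in>?S. y < B)" by (rule cInf_less_iff)
  then show ?thesis
    unfolding delta_def S_eq using supnorm_less_iff[OF assms(1)] by (auto simp: abs_mult)
qed

lemma unit_vector_in_xY:
  assumes "m \<ge> 1"
  shows "(\<lambda>i. if i = 0 then 1 else 0) \<in> xY m n Y"
  unfolding xY_def using assms
  by (intro CollectI exI[of _ "\<lambda>i. if i = 0 then 1 else 0"] exI[of _ "\<lambda>_. 0"]) (auto simp: fun_eq_iff)

lemma xY_bottom_coord_ge_1:
  assumes "v \<in> xY m n Y" and "v \<noteq> (\<lambda>_. 0)" and "\<forall>i<m. \<bar>v i\<bar> < 1"
  shows "\<exists>j<n. 1 \<le> \<bar>v (m + j)\<bar>"
proof -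
  obtain p q :: "nat \<Rightarrow> int" where v: "v = (\<lambda>i. if i < m then of_int (p i) + (\<Sum>j<n. Y i j * of_int (q j))
      else if i < m + n then of_int (q (i - m)) else 0)"
    using assms(1) unfolding xY_def by blast
  have "\<exists>j<n. q j \<noteq> 0"
  proof (rule ccontr)
    assume "\<not> (\<exists>j<n. q j \<noteq> 0)"
    then have q0: "\<forall>j<n. q j = 0" by blast
    have "p i = 0" if "i < m" for i
    proof -
      have "\<bar>real_of_int (p i)\<bar> < 1" using assms(3) that q0 by (simp add: v)
      then show ?thesis by linarith
    qed
    then have "v = (\<lambda>_. 0)" using q0 by (auto simp: v fun_eq_iff)
    then show False using assms(2) by blast
  qed
  then obtain j where "j < n" "q j \<noteq> 0" by blast
  then show ?thesis by (auto simp: v intro!: exI[of _ j])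
qed

lemma xY_scale_sub_int:
  assumes "v \<in> xY m n Y"
  shows "(\<lambda>i. of_int k * v i - (if i < m then of_int (P i) else 0)) \<in> xY m n Y"
proof -
  obtain p q :: "nat \<Rightarrow> int" where v: "v = (\<lambda>i. if i < m then of_int (p i) + (\<Sum>j<n. Y i j * of_int (q j))
      else if i < m + n then of_int (q (i - m)) else 0)"
    using assms(1) unfolding xY_def by blast
  show ?thesis unfolding xY_def
    by (intro CollectI exI[of _ "\<lambda>i. k * p i - P i"] exI[of _ "\<lambda>j. k * q j"])
      (auto simp: v fun_eq_iff algebra_simps sum_distrib_left)
qed

lemma delta_expact_xY_less_iff:
  assumes "m \<ge> 1"
  shows "delta (m + n) (expact a (xY m n Y)) < B \<longleftrightarrow>
    (\<exists>v\<in>xY m n Y. v \<noteq> (\<lambda>_. 0) \<and> (\<forall>i<m + n. exp (a i) * \<bar>v i\<bar> < B))"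
proof (rule delta_expact_less_iff)
  show "(\<lambda>i. if i = 0 then 1 else 0) \<in> xY m n Y" using assms by (rule unit_vector_in_xY)
qed (use assms in \<open>auto simp: fun_eq_iff\<close>)

lemma xY_short_vector_bottom_coord:
  assumes "v \<in> xY m n Y" and "v \<noteq> (\<lambda>_. 0)" and short: "\<forall>i<m + n. exp (a i) * \<bar>v i\<bar> < B"
    and top: "\<forall>i<m. B \<le> exp (a i)"
  shows "\<exists>j<n. 1 \<le> \<bar>v (m + j)\<bar> \<and> exp (a (m + j)) < B"
proof -
  have "\<bar>v i\<bar> < 1" if "i < m" for i
  proof (rule ccontr)
    assume "\<not> \<bar>v i\<bar> < 1"
    then have "exp (a i) \<le> exp (a i) * \<bar>v i\<bar>" by simp
    also have "\<dots> < B" using short that by simp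
    finally show False using top that by fastforce
  qed
  then obtain j where j: "j < n" "1 \<le> \<bar>v (m + j)\<bar>" using xY_bottom_coord_ge_1 assms(1,2) by blast
  then have "exp (a (m + j)) \<le> exp (a (m + j)) * \<bar>v (m + j)\<bar>" by simp
  also have "\<dots> < B" using short j(1) by simp
  finally show ?thesis using j by blast
qed

lemma inj_on_shifted_mod:
  assumes "L \<le> M"
  shows "inj_on (\<lambda>j. nat ((c + int j) mod int M)) {..<L}"
proof
  fix x y assume xy: "x \<in> {..<L}" "y \<in> {..<L}"
    and "nat ((c + int x) mod int M) = nat ((c + int y) mod int M)"
  then have "(c + int x) mod int M = (c + int y) mod int M"
    using assms by (simp add: eq_nat_nat_iff)
  then have "int M dvd int x - int y" by (simp add: mod_eq_dvd_iff)
  moreover have "\<bar>int x - int y\<bar> < int M" using xy assms by auto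
  ultimately have "int x - int y = 0" using dvd_imp_le_int[of "int x - int y" "int M"] by linarith
  then show "x = y" by simp
qed

lemma card_frac_less_ge:
  fixes \<beta> s :: real and M :: nat
  assumes "0 < s" and "s \<le> 1" and "M \<ge> 1"
  shows "nat \<lfloor>real M * s\<rfloor> \<le> card {g \<in> {..<M}. frac (real g / M - \<beta>) < s}"
proof -
  define L where "L = nat \<lfloor>real M * s\<rfloor>"
  define j0 where "j0 = \<lceil>real M * \<beta>\<rceil>"
  define f where "f j = nat ((j0 + int j) mod int M)" for j :: nat
  have M_pos: "real M > 0" using assms by simp
  have "real M * s \<le> real M" using assms by (simp add: mult_left_le)
  then have "\<lfloor>real M * s\<rfloor> \<le> int M" by (metis floor_mono floor_of_nat)
  then have "inj_on f {..<L}" unfolding f_def L_def by (intro inj_on_shifted_mod) simp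
  then have "L = card (f ` {..<L})" by (simp add: card_image)
  moreover have "f ` {..<L} \<subseteq> {g \<in> {..<M}. frac (real g / M - \<beta>) < s}"
  proof
    fix g assume "g \<in> f ` {..<L}"
    then obtain j where j: "j < L" and g: "g = f j" by blast
    define z where "z = j0 + int j"
    have g_z: "int g = z mod int M" unfolding g f_def z_def using M_pos by simp
    then have "g < M" using M_pos by (metis of_nat_0_less_iff of_nat_less_iff pos_mod_bound)
    have "real M * \<beta> \<le> real_of_int z" and "real_of_int z < real M * \<beta> + real M * s"
      using j assms unfolding z_def j0_def L_def by linarith+
    then have z_lo: "0 \<le> real_of_int z / M - \<beta>" and z_hi: "real_of_int z / M - \<beta> < s"
      using M_pos by (simp_all add: field_simps)
    have "z = int M * (z div int M) + int g" using g_z by simp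
    then have "real_of_int z = real M * real_of_int (z div int M) + real g"
      by (metis of_int_add of_int_mult of_int_of_nat_eq)
    then have "real g / M - \<beta> - (real_of_int z / M - \<beta>) = of_int (- (z div int M))"
      using M_pos by (simp add: field_simps)
    then have "frac (real g / M - \<beta>) = real_of_int z / M - \<beta>"
      unfolding frac_unique_iff using z_lo z_hi assms(2) by (metis Ints_of_int order.strict_trans2)
    then show "g \<in> {g \<in> {..<M}. frac (real g / M - \<beta>) < s}"
      using \<open>g < M\<close> z_hi by simp
  qed
  moreover have "finite {g \<in> {..<M}. frac (real g / M - \<beta>) < s}" by simp
  ultimately show ?thesis unfolding L_def[symmetric] using card_mono by (metis (no_types))
qed

lemma frac_diff_near_int:
  assumes "frac x < s" and "frac y < s"
  shows "\<exists>p::int. \<bar>(x - y) - of_int p\<bar> < s"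
proof
  have "(x - y) - of_int (\<lfloor>x\<rfloor> - \<lfloor>y\<rfloor>) = frac x - frac y" by (simp add: frac_def)
  then show "\<bar>(x - y) - of_int (\<lfloor>x\<rfloor> - \<lfloor>y\<rfloor>)\<bar> < s"
    using assms frac_ge_0[of x] frac_ge_0[of y] unfolding abs_less_iff by linarith
qed

lemma overlap_of_card_sum_gt:
  fixes T :: "nat \<Rightarrow> 'a set" and K :: nat
  assumes "finite U" and "\<forall>k\<le>K. T k \<subseteq> U" and "card U < (\<Sum>k\<le>K. card (T k))"
  shows "\<exists>k k'. k < k' \<and> k' \<le> K \<and> T k \<inter> T k' \<noteq> {}"
proof (rule ccontr)
  assume "\<not> ?thesis"
  then have disj: "T k \<inter> T k' = {}" if "k < k'" "k' \<le> K" for k k' using that by blast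
  have "T k \<inter> T k' = {}" if "k \<le> K" "k' \<le> K" "k \<noteq> k'" for k k'
    using that disj[of k k'] disj[of k' k] by (cases "k < k'") (auto simp: Int_commute)
  moreover have "finite (T k)" if "k \<le> K" for k using assms(1,2) that finite_subset by blast
  ultimately have "(\<Sum>k\<le>K. card (T k)) = card (\<Union>k\<le>K. T k)"
    by (intro card_UN_disjoint[symmetric]) auto
  also have "\<dots> \<le> card U" using assms(1,2) by (intro card_mono) auto
  finally show False using assms(3) by simp
qed

lemma frac_boxes_pigeonhole:
  fixes I :: "nat set" and \<alpha> s :: "nat \<Rightarrow> real" and K M :: nat
  assumes "finite I" and s: "\<forall>i\<in>I. 0 < s i \<and> s i \<le> 1 \<and> 1 \<le> real M * s i"
    and "M \<ge> 1" and big: "real M ^ card I < (real K + 1) * (\<Prod>i\<in>I. real M * s i - 1)"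
  shows "\<exists>k. 1 \<le> k \<and> k \<le> K \<and> (\<exists>p::nat \<Rightarrow> int. \<forall>i\<in>I. \<bar>real k * \<alpha> i - p i\<bar> < s i)"
proof -
  define A where "A k i = {g \<in> {..<M}. frac (real g / M - real k * \<alpha> i) < s i}" for k :: nat and i
  define T where "T k = PiE I (A k)" for k
  \<comment> \<open>the grid points g/M lying in the box k\<alpha> + [0, s) modulo 1; two of the K + 1 boxes meet\<close>
  have T_sub: "T k \<subseteq> PiE I (\<lambda>_. {..<M})" for k unfolding T_def A_def by (rule PiE_mono) auto
  have card_T: "(\<Prod>i\<in>I. real M * s i - 1) \<le> real (card (T k))" for k
  proof -
    have "(\<Prod>i\<in>I. real M * s i - 1) \<le> (\<Prod>i\<in>I. real (card (A k i)))"
    proof (rule prod_mono)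
      fix i assume i: "i \<in> I"
      have "real M * s i - 1 \<le> real (nat \<lfloor>real M * s i\<rfloor>)" using s i by linarith
      also have "\<dots> \<le> real (card (A k i))"
        unfolding A_def using card_frac_less_ge[of "s i" M] s i assms(3) by simp
      finally show "0 \<le> real M * s i - 1 \<and> real M * s i - 1 \<le> real (card (A k i))"
        using s i by simp
    qed
    then show ?thesis by (simp add: T_def card_PiE assms(1))
  qed
  have "(\<Sum>k\<le>K. \<Prod>i\<in>I. real M * s i - 1) \<le> (\<Sum>k\<le>K. real (card (T k)))"
    by (rule sum_mono) (rule card_T)
  then have "real (card (PiE I (\<lambda>_. {..<M}))) < (\<Sum>k\<le>K. real (card (T k)))"
    using big by (simp add: card_PiE assms(1) add.commute)
  then have "card (PiE I (\<lambda>_. {..<M})) < (\<Sum>k\<le>K. card (T k))"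
    by (simp only: of_nat_sum[symmetric] of_nat_less_iff)
  then have "\<exists>k k'. k < k' \<and> k' \<le> K \<and> T k \<inter> T k' \<noteq> {}"
    using T_sub assms(1)
    by (intro overlap_of_card_sum_gt[of "PiE I (\<lambda>_. {..<M})"]) (auto simp: finite_PiE)
  then obtain k k' where kk: "k < k'" "k' \<le> K" and "T k \<inter> T k' \<noteq> {}" by blast
  then obtain g where "g \<in> T k" "g \<in> T k'" by blast
  have "\<exists>p::int. \<bar>real (k' - k) * \<alpha> i - p\<bar> < s i" if i: "i \<in> I" for i
  proof -
    let ?x = "real (g i) / M - real k * \<alpha> i" and ?x' = "real (g i) / M - real k' * \<alpha> i"
    have "frac ?x < s i" "frac ?x' < s i"
      using \<open>g \<in> T k\<close> \<open>g \<in> T k'\<close> i unfolding T_def A_def by auto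
    moreover have "?x - ?x' = real (k' - k) * \<alpha> i" using kk by (simp add: of_nat_diff algebra_simps)
    ultimately show ?thesis using frac_diff_near_int by metis
  qed
  then obtain p :: "nat \<Rightarrow> int" where "\<forall>i\<in>I. \<bar>real (k' - k) * \<alpha> i - p i\<bar> < s i" by metis
  then show ?thesis using kk by (intro exI[of _ "k' - k"]) auto
qed

lemma dirichlet_simultaneous:
  fixes I :: "nat set" and \<alpha> s :: "nat \<Rightarrow> real" and K :: nat
  assumes "finite I" and s: "\<forall>i\<in>I. 0 < s i \<and> s i \<le> 1"
    and big: "1 < (real K + 1) * (\<Prod>i\<in>I. s i)"
  shows "\<exists>k. 1 \<le> k \<and> k \<le> K \<and> (\<exists>p::nat \<Rightarrow> int. \<forall>i\<in>I. \<bar>real k * \<alpha> i - p i\<bar> < s i)"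
proof -
  have inv_lim: "(\<lambda>M::nat. 1 / real M) \<longlonglongrightarrow> 0" by (rule lim_const_over_n)
  have lim: "(\<lambda>M. (real K + 1) * (\<Prod>i\<in>I. s i - 1 / real M)) \<longlonglongrightarrow> (real K + 1) * (\<Prod>i\<in>I. s i - 0)"
    by (intro tendsto_intros inv_lim)
  have ev_big: "eventually (\<lambda>M. 1 < (real K + 1) * (\<Prod>i\<in>I. s i - 1 / real M)) sequentially"
    using order_tendstoD(1)[OF lim] big by simp
  have ev_s: "eventually (\<lambda>M. \<forall>i\<in>I. 1 / real M < s i) sequentially"
    using assms(1) s by (intro eventually_ball_finite) (auto intro: order_tendstoD(2)[OF inv_lim])
  obtain M where M: "1 < (real K + 1) * (\<Prod>i\<in>I. s i - 1 / real M)"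
    and M_s: "\<forall>i\<in>I. 1 / real M < s i" and "M \<ge> 1"
    using eventually_conj[OF ev_big eventually_conj[OF ev_s eventually_ge_at_top[of 1]]]
    unfolding eventually_sequentially by blast
  then have M_pos: "real M > 0" by simp
  have "\<forall>i\<in>I. 0 < s i \<and> s i \<le> 1 \<and> 1 \<le> real M * s i"
    using s M_s M_pos by (auto simp: field_simps)
  moreover have "real M ^ card I < (real K + 1) * (\<Prod>i\<in>I. real M * s i - 1)"
  proof -
    have "(\<Prod>i\<in>I. real M * s i - 1) = (\<Prod>i\<in>I. real M * (s i - 1 / real M))"
      using M_pos by (intro prod.cong) (auto simp: field_simps)
    also have "\<dots> = real M ^ card I * (\<Prod>i\<in>I. s i - 1 / real M)" by (simp add: prod.distrib)
    finally show ?thesis using M M_pos by simp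
  qed
  ultimately show ?thesis using frac_boxes_pigeonhole[OF assms(1) _ \<open>M \<ge> 1\<close>] by blast
qed

lemma exists_slack_below_ln:
  fixes a t y :: real
  assumes "a < ln y" and "0 < y" and "0 < t"
  shows "\<exists>\<epsilon>. 0 < \<epsilon> \<and> \<epsilon> < t \<and> 1 < y * exp (- (a + \<epsilon>))"
proof (intro exI conjI)
  define \<epsilon> where "\<epsilon> = min (ln y - a) t / 2"
  show "0 < \<epsilon>" "\<epsilon> < t" unfolding \<epsilon>_def using assms by auto
  have "a + \<epsilon> < ln y" unfolding \<epsilon>_def min_def using assms(1) by (auto simp: field_simps)
  then have "exp (a + \<epsilon>) < y" using exp_less_mono[of "a + \<epsilon>" "ln y"] assms(2) by simp
  then have "1 < y / exp (a + \<epsilon>)" by (intro less_divide_eq_1_pos[THEN iffD2]) simp_all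
  then show "1 < y * exp (- (a + \<epsilon>))" by (simp only: exp_minus divide_inverse)
qed

lemma dirichlet_exp_weights:
  fixes I :: "nat set" and \<alpha> :: "nat \<Rightarrow> real" and R t :: real and m :: nat
  assumes "finite I" and "I \<noteq> {}" and "card I < m" and "0 < R" and "0 < t"
  shows "\<exists>\<epsilon> k p. 0 < \<epsilon> \<and> \<epsilon> < t \<and> 1 \<le> k \<and> real k * exp (- R) \<le> exp (- R / m) \<and>
    (\<forall>i\<in>I. exp (\<epsilon> / card I) * \<bar>real k * \<alpha> i - of_int (p i)\<bar> < exp (- R / m))"
proof -
  define d where "d = card I"
  have d_pos: "real d > 0" and d_le: "real d \<le> real m - 1"
    using assms(1-3) unfolding d_def by (auto simp: card_gt_0_iff)
  define K where "K = nat \<lfloor>exp (R * (real m - 1) / m)\<rfloor>"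
  have "real K = of_int \<lfloor>exp (R * (real m - 1) / m)\<rfloor>" unfolding K_def by simp
  then have K_le: "real K \<le> exp (R * (real m - 1) / m)"
    and K_gt: "exp (R * (real m - 1) / m) < real K + 1"
    by linarith+
  have "real d * R / m \<le> R * (real m - 1) / m"
    using d_le assms(4) by (simp add: divide_right_mono mult.commute mult_right_mono)
  also have "\<dots> < ln (real K + 1)"
    using K_gt ln_less_cancel_iff[of "exp (R * (real m - 1) / m)" "real K + 1"] by simp
  finally obtain \<epsilon> where \<epsilon>: "0 < \<epsilon>" "\<epsilon> < t"
    and big: "1 < (real K + 1) * exp (- (real d * R / m + \<epsilon>))"
    using exists_slack_below_ln[of _ "real K + 1" t] assms(5) by auto
  define s where "s = exp (- R / m - \<epsilon> / d)"
  have "0 \<le> R / m" "0 \<le> \<epsilon> / d" using assms(4) \<epsilon>(1) d_pos by auto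
  then have s: "0 < s" "s \<le> 1" unfolding s_def by simp_all
  have "- (real d * R / m + \<epsilon>) = real d * (- R / m - \<epsilon> / d)" using d_pos by (simp add: field_simps)
  then have "exp (- (real d * R / m + \<epsilon>)) = (\<Prod>i\<in>I. s)"
    unfolding s_def d_def by (simp add: exp_of_nat_mult)
  then obtain k p where k: "1 \<le> k" "k \<le> K" and p: "\<forall>i\<in>I. \<bar>real k * \<alpha> i - of_int (p i)\<bar> < s"
    using dirichlet_simultaneous[OF assms(1), of "\<lambda>_. s" K \<alpha>] big s by auto
  have "real k * exp (- R) \<le> exp (R * (real m - 1) / m) * exp (- R)" using k K_le by simp
  also have "\<dots> = exp (- R / m)" unfolding mult_exp_exp using assms(3) by (simp add: field_simps)
  finally have "real k * exp (- R) \<le> exp (- R / m)" .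
  moreover have "exp (\<epsilon> / d) * \<bar>real k * \<alpha> i - of_int (p i)\<bar> < exp (- R / m)" if "i \<in> I" for i
  proof -
    have "exp (\<epsilon> / d) * \<bar>real k * \<alpha> i - of_int (p i)\<bar> < exp (\<epsilon> / d) * s"
      using p that by (intro mult_strict_left_mono) auto
    also have "\<dots> = exp (- R / m)" unfolding s_def mult_exp_exp by simp
    finally show ?thesis .
  qed
  ultimately show ?thesis using \<epsilon> k(1) unfolding d_def by blast
qed

lemma Ccone_bottom_ge:
  assumes "a \<in> Ccone m n R t" and "0 \<le> R" and "j < n"
  shows "- t \<le> a (m + j)"
proof -
  have "- a (m + j) \<le> (\<Sum>j<n. - a (m + j))"
    using assms by (intro member_le_sum) (auto simp: Ccone_def less_le_not_le)
  then show ?thesis using assms(1) by (simp add: Ccone_def sum_negf)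
qed

lemma affine_contraction_le:
  fixes R t x :: real
  assumes "0 \<le> R" and "0 < t" and "- t \<le> x"
  shows "- R + (t - R) / t * x \<le> x"
proof -
  have "R * (- t) \<le> R * x" using assms(3,1) by (rule mult_left_mono)
  then show ?thesis using assms(2) by (simp add: field_simps)
qed

lemma Ccone_raise:
  assumes a: "a \<in> Ccone m n 0 t" and "m \<ge> 1" and "0 \<le> R" and "R < t"
  shows "\<exists>a'\<in>Ccone m n R (t + (real n - 1) * R).
    (\<forall>i<m. a' i = a i + (real n - 1) * R / m) \<and> (\<forall>j<n. a' (m + j) \<le> a (m + j))"
proof -
  have a_top: "(\<Sum>i<m. a i) = t" "\<forall>i<m. 0 < a i"
    and a_bottom: "(\<Sum>j<n. a (m + j)) = - t" "\<forall>j<n. a (m + j) < 0"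
    using a unfolding Ccone_def by auto
  have t_pos: "0 < t" using assms(3,4) by linarith
  then have "n \<ge> 1" using a_bottom(1) by (cases n) auto
  define \<theta> where "\<theta> = (t - R) / t"
  have \<theta>: "0 < \<theta>" "\<theta> * t = t - R" unfolding \<theta>_def using assms(4) t_pos by auto
  define a' where "a' i = (if i < m then a i + (real n - 1) * R / m
    else if i < m + n then - R + \<theta> * a i else 0)" for i
  have "a' \<in> Ccone m n R (t + (real n - 1) * R)"
    unfolding Ccone_def
  proof (intro CollectI conjI allI impI)
    show "a' i = 0" if "m + n \<le> i" for i using that unfolding a'_def by simp
    show "(\<Sum>i<m. a' i) = t + (real n - 1) * R"
      using a_top(1) assms(2) by (simp add: a'_def sum.distrib)
    have "(\<Sum>j<n. a' (m + j)) = \<theta> * (\<Sum>j<n. a (m + j)) - real n * R"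
      by (simp add: a'_def sum_subtractf sum_distrib_left)
    then show "(\<Sum>j<n. a' (m + j)) = - (t + (real n - 1) * R)"
      using a_bottom(1) \<theta>(2) by (simp add: algebra_simps)
    show "- R < a' i" if "i < m" for i
    proof -
      have "0 \<le> (real n - 1) * R / m" using \<open>n \<ge> 1\<close> assms(3) by simp
      moreover have "a' i = a i + (real n - 1) * R / m" using that by (simp add: a'_def)
      ultimately show ?thesis using that a_top(2) assms(3) by fastforce
    qed
    show "a' (m + j) < - R" if "j < n" for j
      using that a_bottom(2) \<theta>(1) unfolding a'_def by (simp add: mult_pos_neg)
  qed
  moreover have "a' (m + j) \<le> a (m + j)" if "j < n" for j
    using affine_contraction_le[OF assms(3) t_pos Ccone_bottom_ge[OF a _ that]] that
    by (simp add: a'_def \<theta>_def)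
  moreover have "\<forall>i<m. a' i = a i + (real n - 1) * R / m" by (simp add: a'_def)
  ultimately show ?thesis by blast
qed

lemma Ccone_rebalance:
  assumes a: "a \<in> Ccone m n R t" and "0 \<le> R" and "0 < \<epsilon>" and "\<epsilon> < t"
    and I_ne: "{i. i < m \<and> a i \<le> 0} \<noteq> {}"
  defines "I \<equiv> {i. i < m \<and> a i \<le> 0}"
  shows "\<exists>a'\<in>Ccone m n 0 t. (\<forall>i\<in>I. a' i = \<epsilon> / card I) \<and> (\<forall>i. i \<notin> I \<longrightarrow> a' i \<le> a i)"
proof -
  have a_top: "(\<Sum>i<m. a i) = t"
    and a_bottom: "\<forall>i\<ge>m + n. a i = 0" "(\<Sum>j<n. a (m + j)) = - t" "\<forall>j<n. a (m + j) < - R"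
    using a unfolding Ccone_def by auto
  define J where "J = {i. i < m \<and> 0 < a i}"
  have IJ: "{..<m} = I \<union> J" "I \<inter> J = {}" "finite I" "finite J" unfolding I_def J_def by auto
  have d_pos: "real (card I) > 0" using I_ne IJ(3) unfolding I_def by (simp add: card_gt_0_iff)
  define S where "S = (\<Sum>i\<in>J. a i)"
  have "t = (\<Sum>i\<in>I. a i) + S" unfolding S_def using a_top IJ by (simp add: sum.union_disjoint)
  moreover have "(\<Sum>i\<in>I. a i) \<le> 0" unfolding I_def by (rule sum_nonpos) auto
  ultimately have S_ge: "t \<le> S" by linarith
  have scale: "0 < (t - \<epsilon>) / S" "(t - \<epsilon>) / S \<le> 1" using S_ge assms(3,4) by auto
  define a' where
    "a' i = (if i \<in> I then \<epsilon> / card I else if i \<in> J then a i * ((t - \<epsilon>) / S) else a i)" for i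
  have "a' \<in> Ccone m n 0 t" unfolding Ccone_def
  proof (intro CollectI conjI allI impI)
    show "a' i = 0" if "m + n \<le> i" for i using a_bottom(1) that unfolding a'_def I_def J_def by auto
    have "(\<Sum>i<m. a' i) = (\<Sum>i\<in>I. a' i) + (\<Sum>i\<in>J. a' i)" using IJ by (simp add: sum.union_disjoint)
    also have "(\<Sum>i\<in>I. a' i) = \<epsilon>" unfolding a'_def using d_pos by simp
    also have "(\<Sum>i\<in>J. a' i) = (\<Sum>i\<in>J. a i) * ((t - \<epsilon>) / S)"
      unfolding a'_def sum_distrib_right using IJ(2) by (intro sum.cong) auto
    also have "\<dots> = t - \<epsilon>" unfolding S_def[symmetric] using S_ge assms(3,4) by simp
    finally show "(\<Sum>i<m. a' i) = t" by simp
    have "a' (m + j) = a (m + j)" for j unfolding a'_def I_def J_def by simp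
    then show "(\<Sum>j<n. a' (m + j)) = - t" using a_bottom(2) by simp
    show "- 0 < a' i" if "i < m" for i
      using that d_pos assms(3,4) S_ge unfolding a'_def I_def J_def
      by (auto simp: zero_less_divide_iff zero_less_mult_iff)
    show "a' (m + j) < - 0" if "j < n" for j
      using that a_bottom(3) assms(2) unfolding a'_def I_def J_def by fastforce
  qed
  moreover have "\<forall>i. i \<notin> I \<longrightarrow> a' i \<le> a i"
    using scale mult_left_le[of "(t - \<epsilon>) / S"] unfolding a'_def I_def J_def by auto
  moreover have "\<forall>i\<in>I. a' i = \<epsilon> / card I" unfolding a'_def by simp
  ultimately show ?thesis by blast
qed

lemma small_delta_Ccone_0_imp_Ccone_R:
  assumes "m \<ge> 1" and "n \<ge> 1" and "0 < R" and a: "a \<in> Ccone m n 0 t"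
    and "delta (m + n) (expact a (xY m n Y)) < exp (- ((real (m + n) - 1) * R / m))"
  shows "\<exists>a'\<in>Ccone m n R (t + (real n - 1) * R). delta (m + n) (expact a' (xY m n Y)) < exp (- R)"
proof -
  define B where "B = exp (- ((real (m + n) - 1) * R / m))"
  have R_le: "R \<le> (real (m + n) - 1) * R / m" using assms(1-3) by (simp add: field_simps)
  then have B_le: "B \<le> exp (- R)" unfolding B_def by simp
  obtain v where v: "v \<in> xY m n Y" "v \<noteq> (\<lambda>_. 0)" and short: "\<forall>i<m + n. exp (a i) * \<bar>v i\<bar> < B"
    using assms(5) unfolding B_def[symmetric] delta_expact_xY_less_iff[OF assms(1)] by blast
  have "B \<le> 1" using B_le assms(3) by (simp add: order_trans)
  moreover have "\<forall>i<m. 1 \<le> exp (a i)" using a by (simp add: Ccone_def less_imp_le)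
  ultimately have "\<forall>i<m. B \<le> exp (a i)" by (meson order_trans)
  then obtain j0 where j0: "j0 < n" "exp (a (m + j0)) < B"
    using xY_short_vector_bottom_coord[OF v short] by blast
  then have "a (m + j0) < - R" using R_le unfolding B_def by simp
  then have "R < t" using Ccone_bottom_ge[OF a _ j0(1)] by simp
  then obtain a' where a': "a' \<in> Ccone m n R (t + (real n - 1) * R)"
    and a'_top: "\<forall>i<m. a' i = a i + (real n - 1) * R / m"
    and a'_bottom: "\<forall>j<n. a' (m + j) \<le> a (m + j)"
    using Ccone_raise[OF a assms(1) less_imp_le[OF assms(3)] \<open>R < t\<close>] by blast
  have "exp (a' i) * \<bar>v i\<bar> < exp (- R)" if i: "i < m + n" for i
  proof (cases "i < m")
    case True
    then have "exp (a' i) * \<bar>v i\<bar> = exp ((real n - 1) * R / m) * (exp (a i) * \<bar>v i\<bar>)"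
      using a'_top by (simp add: exp_add)
    also have "\<dots> < exp ((real n - 1) * R / m) * B" using short i by simp
    also have "\<dots> = exp (- R)" unfolding B_def mult_exp_exp using assms(1) by (simp add: field_simps)
    finally show ?thesis .
  next
    case False
    then obtain j where "i = m + j" "j < n" using i by (intro that[of "i - m"]) auto
    then have "exp (a' i) * \<bar>v i\<bar> \<le> exp (a i) * \<bar>v i\<bar>"
      using a'_bottom by (simp add: mult_right_mono)
    moreover have "exp (a i) * \<bar>v i\<bar> < B" using short i by simp
    ultimately show ?thesis using B_le by linarith
  qed
  then show ?thesis using a' v delta_expact_xY_less_iff[OF assms(1)] by blast
qed

lemma small_delta_Ccone_0_of_nonpos_top:
  assumes "m \<ge> 1" and "0 < R" and "0 < t" and a: "a \<in> Ccone m n R t"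
    and v: "v \<in> xY m n Y" and short: "\<forall>i<m + n. exp (a i) * \<bar>v i\<bar> < exp (- R)"
    and bottom: "v (m + j0) \<noteq> 0" and nonpos: "{i. i < m \<and> a i \<le> 0} \<noteq> {}"
  shows "\<exists>a'\<in>Ccone m n 0 t. delta (m + n) (expact a' (xY m n Y)) < exp (- R / m)"
proof -
  define I where "I = {i. i < m \<and> a i \<le> 0}"
  have "(\<Sum>i<m. a i) = t" using a by (simp add: Ccone_def)
  then have "\<not> (\<forall>i<m. a i \<le> 0)" using assms(3) sum_nonpos[of "{..<m}" a] by auto
  then have "I \<subset> {..<m}" unfolding I_def by auto
  then have "card I < m" by (metis card_lessThan finite_lessThan psubset_card_mono)
  then obtain \<epsilon> k p where \<epsilon>: "0 < \<epsilon>" "\<epsilon> < t"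
    and k: "1 \<le> k" "real k * exp (- R) \<le> exp (- R / m)"
    and p: "\<forall>i\<in>I. exp (\<epsilon> / card I) * \<bar>real k * v i - of_int (p i)\<bar> < exp (- R / m)"
    using dirichlet_exp_weights[of I m R t v] nonpos assms(2,3) unfolding I_def by auto
  obtain a' where a': "a' \<in> Ccone m n 0 t" and a'_I: "\<forall>i\<in>I. a' i = \<epsilon> / card I"
    and a'_le: "\<forall>i. i \<notin> I \<longrightarrow> a' i \<le> a i"
    using Ccone_rebalance[OF a less_imp_le[OF assms(2)] \<epsilon> nonpos] unfolding I_def by blast
  define w where
    "w i = of_int (int k) * v i - (if i < m then of_int (if i \<in> I then p i else 0) else 0)" for i
  have "w (m + j0) \<noteq> 0" using k(1) bottom by (simp add: w_def)
  then have "w \<noteq> (\<lambda>_. 0)" by auto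
  moreover have "w \<in> xY m n Y" unfolding w_def by (rule xY_scale_sub_int[OF v])
  moreover have "exp (a' i) * \<bar>w i\<bar> < exp (- R / m)" if i: "i < m + n" for i
  proof (cases "i \<in> I")
    case True
    then show ?thesis using p a'_I by (simp add: w_def I_def)
  next
    case False
    then have "exp (a' i) * \<bar>w i\<bar> = real k * (exp (a' i) * \<bar>v i\<bar>)"
      by (simp add: w_def abs_mult)
    also have "\<dots> \<le> real k * (exp (a i) * \<bar>v i\<bar>)"
      using a'_le False by (intro mult_left_mono mult_right_mono) auto
    also have "\<dots> < real k * exp (- R)" using short i k(1) by simp
    finally show ?thesis using k(2) by linarith
  qed
  ultimately show ?thesis using a' delta_expact_xY_less_iff[OF assms(1)] by blast
qed

lemma small_delta_Ccone_R_imp_Ccone_0: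
  assumes "m \<ge> 1" and "0 < R" and "0 < t" and a: "a \<in> Ccone m n R t"
    and "delta (m + n) (expact a (xY m n Y)) < exp (- R)"
  shows "\<exists>a'\<in>Ccone m n 0 t. delta (m + n) (expact a' (xY m n Y)) < exp (- R / m)"
proof (cases "\<forall>i<m. 0 < a i")
  case True
  then have "a \<in> Ccone m n 0 t" using a assms(2) unfolding Ccone_def by force
  moreover have "exp (- R) \<le> exp (- R / m)" using assms(1,2) by (simp add: field_simps)
  ultimately show ?thesis using assms(5) by (blast intro: less_le_trans)
next
  case False
  obtain v where v: "v \<in> xY m n Y" "v \<noteq> (\<lambda>_. 0)"
    and short: "\<forall>i<m + n. exp (a i) * \<bar>v i\<bar> < exp (- R)"
    using assms(5) unfolding delta_expact_xY_less_iff[OF assms(1)] by blast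
  have "\<forall>i<m. exp (- R) \<le> exp (a i)" using a by (simp add: Ccone_def less_imp_le)
  then obtain j0 where "j0 < n" "1 \<le> \<bar>v (m + j0)\<bar>"
    using xY_short_vector_bottom_coord[OF v short] by blast
  moreover have "{i. i < m \<and> a i \<le> 0} \<noteq> {}" using False by auto
  ultimately show ?thesis
    using small_delta_Ccone_0_of_nonpos_top[OF assms(1-4) v(1) short] by fastforce
qed

theorem mainTheorem11:
  fixes m n :: nat and Y :: "nat \<Rightarrow> nat \<Rightarrow> real" and c t :: real
  assumes "m \<ge> 1" and "n \<ge> 1" and "0 < c" and "c < 1" and "t > 0"
  shows "((\<exists>a \<in> Ccone m n (ln (1 / c) / real (m + n)) t.
              delta (m + n) (expact a (xY m n Y)) < c powr (1 / real (m + n)))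
          \<longrightarrow> (\<exists>a' \<in> Ccone m n 0 t.
              delta (m + n) (expact a' (xY m n Y)) < c powr (1 / (real m * real (m + n)))))
       \<and> ((\<exists>a \<in> Ccone m n 0 t.
              delta (m + n) (expact a (xY m n Y)) < c powr ((real (m + n) - 1) / (real m * real (m + n))))
          \<longrightarrow> (\<exists>a' \<in> Ccone m n (ln (1 / c) / real (m + n)) (t - (real n - 1) / real (m + n) * ln c).
              delta (m + n) (expact a' (xY m n Y)) < c powr (1 / real (m + n))))"
proof -
  define R where "R = ln (1 / c) / real (m + n)"
  have mn_pos: "0 < real (m + n)" "real m + real n \<noteq> 0" "real m \<noteq> 0" using assms(1) by simp_all
  have "ln c < 0" using assms(3,4) by simp
  then have R_pos: "0 < R"
    unfolding R_def using assms(3) mn_pos by (simp add: ln_div divide_neg_pos)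
  have c_powr: "c powr x = exp (- (x * real (m + n) * R))" for x
    unfolding R_def using assms(3) mn_pos by (simp add: powr_def ln_div)
  have e1: "c powr (1 / real (m + n)) = exp (- R)"
    unfolding c_powr using mn_pos by simp
  have e2: "c powr (1 / (real m * real (m + n))) = exp (- R / m)"
    unfolding c_powr using mn_pos by (simp add: field_simps del: of_nat_add)
  have e3: "c powr ((real (m + n) - 1) / (real m * real (m + n)))
      = exp (- ((real (m + n) - 1) * R / m))"
    unfolding c_powr using mn_pos by (simp add: field_simps del: of_nat_add)
  have e4: "t - (real n - 1) / real (m + n) * ln c = t + (real n - 1) * R"
    unfolding R_def using assms(3) mn_pos by (simp add: ln_div)
  show ?thesis
    unfolding e1 e2 e3 e4 R_def[symmetric]
    using small_delta_Ccone_R_imp_Ccone_0[OF assms(1) R_pos assms(5)]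
      small_delta_Ccone_0_imp_Ccone_R[OF assms(1,2) R_pos]
    by blast
qed

end
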